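(* Let $\Phi$ be a dictionary with coherence $\mu$ and Babel function $\mu_1$, let $m\ge1$ with $m<\tfrac12(\mu^{-1}+1)$, and let $y=\Phi x^*$ be an $m$-sparse signal with $\|x^*\|_0\le m$. Let $\beta>0$ with $\|x^*\|_1<\beta$. Then there exists an integer $K$ such that for all iterations $k\ge K$ of the Frank-Wolfe algorithm for Problem (P$_\beta$), $$\|r_{k+1}\|_2^2\le(1-\theta)\,\|r_k\|_2^2,\qquad \theta=\frac{1}{16}\cdot\frac{1-\mu_1(m-1)}{m}\cdot\Big(1-\frac{\|x^*\|_1}{\beta}\Big)^2,$$ and $0<\theta\le1$.
   Context: A dictionary is a matrix $\Phi=[\varphi_1,\dots,\varphi_n]\in\mathbb{R}^{d\times n}$ whose columns (atoms) satisfy $\|\varphi_i\|_2=1$. Its coherence is $\mu=\max_{j\neq k}|\langle\varphi_j,\varphi_k\rangle|$, and its Babel function is $\mu_1(p)=\max_{|\Lambda|=p}\max_{i\notin\Lambda}\sum_{j\in\Lambda}|\langle\varphi_i,\varphi_j\rangle|$ for $p\ge1$, with $\mu_1(0)=0$. A signal $y\in\mathbb{R}^d$ is $m$-sparse if $y=\Phi x^*$ for some $x^*\in\mathbb{R}^n$ with at most $m$ nonzero entries; when $m<\tfrac12(\mu^{-1}+1)$ such an $x^*$ is unique. Problem (P$_\beta$): minimize $f(x)=\tfrac12\|y-\Phi x\|_2^2$ over $B_1(\beta)=\{x\in\mathbb{R}^n:\|x\|_1\le\beta\}$. Frank-Wolfe algorithm for (P$_\beta$): set $x_0=0$. For $k=0,1,2,\dots$: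 let $r_k=y-\Phi x_k$ (the residual); choose $i_k\in\arg\max_{i}|\langle\varphi_i,r_k\rangle|$ (any maximizer); set $s_k=\operatorname{sign}(\langle\varphi_{i_k},r_k\rangle)\,\beta\, e_{i_k}$ ($e_i$ the canonical basis vectors, $\operatorname{sign}(0)\in\{\pm1\}$ arbitrary); choose $\gamma_k\in\arg\min_{\gamma\in[0,1]}\|y-\Phi(x_k+\gamma(s_k-x_k))\|_2^2$; set $x_{k+1}=x_k+\gamma_k(s_k-x_k)$. *)

theory Defs
  imports "HOL-Analysis.Analysis"
begin

definition atom :: "real^'n^'d \<Rightarrow> 'n \<Rightarrow> real^'d" where
  "atom Phi i = column i Phi"

definition is_dictionary :: "real^'n^'d \<Rightarrow> bool" where
  "is_dictionary Phi \<longleftrightarrow> (\<forall>i. norm (atom Phi i) = 1)"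

text \<open>Coherence: max over j \<noteq> k of |<phi_j, phi_k>| (0 if there is only one atom).\<close>
definition coherence :: "real^'n^'d \<Rightarrow> real" where
  "coherence Phi = Max ({0} \<union> {\<bar>atom Phi j \<bullet> atom Phi k\<bar> | j k. j \<noteq> k})"

text \<open>Babel function; mu_1(0) = 0, and 0 when no admissible (Lambda, i) exists.\<close>
definition babel :: "real^'n^'d \<Rightarrow> nat \<Rightarrow> real" where
  "babel Phi p = (if p = 0 then 0 else
     Max ({0} \<union> {\<Sum>j\<in>L. \<bar>atom Phi i \<bullet> atom Phi j\<bar> | L i. card L = p \<and> i \<notin> L}))"

definition l1norm :: "real^'n \<Rightarrow> real" where
  "l1norm x = (\<Sum>i\<in>UNIV. \<bar>x $ i\<bar>)"

definition l0norm :: "real^'n \<Rightarrow> nat" where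
  "l0norm x = card {i. x $ i \<noteq> 0}"

definition residual :: "real^'n^'d \<Rightarrow> real^'d \<Rightarrow> real^'n \<Rightarrow> real^'d" where
  "residual Phi y x = y - Phi *v x"

text \<open>xs is a (any) run of the Frank-Wolfe algorithm for problem (P_beta):
  every admissible choice of maximizing index, sign and step size is allowed.\<close>
definition fw_run :: "real^'n^'d \<Rightarrow> real^'d \<Rightarrow> real \<Rightarrow> (nat \<Rightarrow> real^'n) \<Rightarrow> bool" where
  "fw_run Phi y beta xs \<longleftrightarrow> xs 0 = 0 \<and>
     (\<forall>k. \<exists>i sg gam.
        (\<forall>j. \<bar>atom Phi j \<bullet> residual Phi y (xs k)\<bar> \<le> \<bar>atom Phi i \<bullet> residual Phi y (xs k)\<bar>) \<and>
        sg \<in> {-1, 1} \<and>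
        (atom Phi i \<bullet> residual Phi y (xs k) \<noteq> 0 \<longrightarrow> sg = sgn (atom Phi i \<bullet> residual Phi y (xs k))) \<and>
        (let s = (sg * beta) *\<^sub>R axis i 1 in
          gam \<in> {0..1} \<and>
          (\<forall>g\<in>{0..1}. (norm (y - Phi *v (xs k + gam *\<^sub>R (s - xs k))))\<^sup>2
                        \<le> (norm (y - Phi *v (xs k + g *\<^sub>R (s - xs k))))\<^sup>2) \<and>
          xs (Suc k) = xs k + gam *\<^sub>R (s - xs k)))"

end

(* As long as the residual r = y - Phi x is nonzero, every iterate x lies in B_1(beta) and
   is supported in S = supp x*, so r = Phi (x* - x) with x* - x supported in S. Under
   (2m - 1) mu < 1 the greedy atom phi_i of such a residual lies in S (the coherence form of
   Tropp's exact recovery condition), which keeps the next iterate supported in S, and the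
   same estimates give ||r||^2 <= 2m <phi_i, r>^2. The Frank-Wolfe gap <r, Phi (s - x)> is at
   least (beta - ||x*||_1) |<phi_i, r>|, and the direction Phi (s - x) has norm at most
   2 beta, so exact line search removes the fraction (1 - ||x*||_1 / beta)^2 / (8m) of ||r||^2.
   This dominates theta, since the Babel term only lowers it; hence K = 0 works. *)

theory Submission
  imports Defs
begin

definition vec_support :: "real^'n \<Rightarrow> 'n set" where
  "vec_support x = {i. x $ i \<noteq> 0}"

lemma l0norm_eq_card_vec_support: "l0norm x = card (vec_support x)"
  by (simp add: l0norm_def vec_support_def)

lemma vec_support_diff_subset: "vec_support (x - z) \<subseteq> vec_support x \<union> vec_support z"
  by (auto simp: vec_support_def)

lemma vec_support_convex_combination_subset:
  "vec_support (x + c *\<^sub>R (s - x)) \<subseteq> vec_support x \<union> vec_support s"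
  by (auto simp: vec_support_def)

lemma ex_abs_component_max: "\<exists>l. \<forall>j. \<bar>(x::real^'n) $ j\<bar> \<le> \<bar>x $ l\<bar>"
proof -
  obtain l where "\<bar>x $ l\<bar> = Max (range (\<lambda>j. \<bar>x $ j\<bar>))"
    by (metis (mono_tags, lifting) Max_in finite UNIV_not_empty finite_imageI image_is_empty imageE)
  then show ?thesis by (metis Max_ge finite rangeI finite_imageI)
qed

lemma l1norm_nonneg: "0 \<le> l1norm x"
  by (simp add: l1norm_def sum_nonneg)

lemma l1norm_scaleR_axis: "l1norm (c *\<^sub>R axis i 1 :: real^'n) = \<bar>c\<bar>"
proof -
  have "l1norm (c *\<^sub>R axis i 1 :: real^'n) = (\<Sum>j\<in>UNIV. if j = i then \<bar>c\<bar> else 0)"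
    unfolding l1norm_def by (intro sum.cong) (auto simp: axis_def)
  then show ?thesis by simp
qed

lemma l1norm_convex_combination_le:
  assumes "0 \<le> g" "g \<le> 1"
  shows "l1norm (x + g *\<^sub>R (s - x)) \<le> (1 - g) * l1norm x + g * l1norm s"
proof -
  have "\<bar>(x + g *\<^sub>R (s - x)) $ j\<bar> \<le> (1 - g) * \<bar>x $ j\<bar> + g * \<bar>s $ j\<bar>" for j
  proof -
    have "\<bar>(x + g *\<^sub>R (s - x)) $ j\<bar> = \<bar>(1 - g) * x $ j + g * s $ j\<bar>"
      by (simp add: algebra_simps)
    also have "\<dots> \<le> \<bar>(1 - g) * x $ j\<bar> + \<bar>g * s $ j\<bar>" by (rule abs_triangle_ineq)
    finally show ?thesis using assms by (simp add: abs_mult)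
  qed
  then have "l1norm (x + g *\<^sub>R (s - x)) \<le> (\<Sum>j\<in>UNIV. (1 - g) * \<bar>x $ j\<bar> + g * \<bar>s $ j\<bar>)"
    unfolding l1norm_def by (rule sum_mono)
  also have "\<dots> = (1 - g) * l1norm x + g * l1norm s"
    by (simp add: l1norm_def sum.distrib sum_distrib_left)
  finally show ?thesis .
qed

lemma matrix_vector_mult_eq_sum_atoms: "Phi *v v = (\<Sum>j\<in>UNIV. v $ j *\<^sub>R atom Phi j)"
  by (simp add: matrix_mult_sum atom_def scalar_mult_eq_scaleR)

lemma inner_matrix_vector_mult: "r \<bullet> (Phi *v v) = (\<Sum>j\<in>UNIV. v $ j * (atom Phi j \<bullet> r))"
  by (simp add: matrix_vector_mult_eq_sum_atoms inner_sum_right inner_commute)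

lemma inner_matrix_vector_mult_le:
  assumes "\<And>j. \<bar>atom Phi j \<bullet> r\<bar> \<le> M"
  shows "r \<bullet> (Phi *v v) \<le> l1norm v * M"
proof -
  have "v $ j * (atom Phi j \<bullet> r) \<le> \<bar>v $ j\<bar> * M" for j
  proof -
    have "v $ j * (atom Phi j \<bullet> r) \<le> \<bar>v $ j\<bar> * \<bar>atom Phi j \<bullet> r\<bar>"
      by (metis abs_ge_self abs_mult)
    also have "\<dots> \<le> \<bar>v $ j\<bar> * M" by (intro mult_left_mono assms) simp
    finally show ?thesis .
  qed
  then show ?thesis
    unfolding inner_matrix_vector_mult l1norm_def sum_distrib_right by (rule sum_mono)
qed

lemma norm_matrix_vector_mult_le_l1norm:
  assumes "is_dictionary Phi"
  shows "norm (Phi *v v) \<le> l1norm v"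
proof -
  have "norm (Phi *v v) \<le> (\<Sum>j\<in>UNIV. norm (v $ j *\<^sub>R atom Phi j))"
    unfolding matrix_vector_mult_eq_sum_atoms by (rule norm_sum)
  also have "\<dots> = l1norm v"
    using assms by (simp add: is_dictionary_def l1norm_def)
  finally show ?thesis .
qed

lemma residual_eq_matrix_vector_mult_diff:
  "y = Phi *v xstar \<Longrightarrow> residual Phi y x = Phi *v (xstar - x)"
  by (simp add: residual_def matrix_vector_mult_diff_distrib)

lemma norm_residual_le:
  assumes "is_dictionary Phi" "y = Phi *v xstar"
  shows "norm (residual Phi y x) \<le> l1norm xstar + l1norm x"
  using norm_triangle_ineq4[of y "Phi *v x"] norm_matrix_vector_mult_le_l1norm[OF assms(1)]
  unfolding residual_def assms(2) by (smt (verit))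

lemma abs_inner_atom_le_norm:
  assumes "is_dictionary Phi"
  shows "\<bar>atom Phi i \<bullet> r\<bar> \<le> norm r"
  using Cauchy_Schwarz_ineq2[of "atom Phi i" r] assms by (simp add: is_dictionary_def)

lemma inner_atom_self:
  assumes "is_dictionary Phi"
  shows "atom Phi i \<bullet> atom Phi i = 1"
  using assms by (simp add: is_dictionary_def dot_square_norm)

lemma finite_image_pairs: "finite {f a b | (a::'a::finite) (b::'b::finite). P a b}"
  by (rule finite_subset[of _ "case_prod f ` UNIV"]) auto

lemma abs_inner_atoms_le_coherence:
  assumes "j \<noteq> k"
  shows "\<bar>atom Phi j \<bullet> atom Phi k\<bar> \<le> coherence Phi"
  unfolding coherence_def using assms by (intro Max_ge) (auto simp: finite_image_pairs)

lemma coherence_nonneg: "0 \<le> coherence Phi"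
  unfolding coherence_def by (intro Max_ge) (auto simp: finite_image_pairs)

lemma babel_nonneg: "0 \<le> babel Phi p"
  unfolding babel_def by (auto intro: Max_ge simp: finite_image_pairs)

lemma babel_le_coherence: "babel Phi p \<le> real p * coherence Phi"
proof -
  have "(\<Sum>j\<in>L. \<bar>atom Phi i \<bullet> atom Phi j\<bar>) \<le> real p * coherence Phi"
    if "card L = p" "i \<notin> L" for L i
  proof -
    have "(\<Sum>j\<in>L. \<bar>atom Phi i \<bullet> atom Phi j\<bar>) \<le> (\<Sum>j\<in>L. coherence Phi)"
      using \<open>i \<notin> L\<close> by (intro sum_mono abs_inner_atoms_le_coherence) auto
    then show ?thesis using \<open>card L = p\<close> by simp
  qed
  moreover have "0 \<le> real p * coherence Phi" by (simp add: coherence_nonneg)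
  ultimately show ?thesis
    unfolding babel_def by (auto intro!: Max.boundedI simp: finite_image_pairs)
qed

lemma coherence_condition_mono:
  assumes "(2 * real m - 1) * coherence Phi < 1" "k \<le> m"
  shows "(2 * real k - 1) * coherence Phi < 1"
proof -
  have "(2 * real k - 1) * coherence Phi \<le> (2 * real m - 1) * coherence Phi"
    using assms(2) by (intro mult_right_mono) (auto simp: coherence_nonneg)
  then show ?thesis using assms(1) by linarith
qed

lemma inner_atom_matrix_vector_mult_supported:
  assumes "vec_support w \<subseteq> S"
  shows "atom Phi l \<bullet> (Phi *v w) = (\<Sum>j\<in>S. w $ j * (atom Phi l \<bullet> atom Phi j))"
proof -
  have "atom Phi l \<bullet> (Phi *v w) = (\<Sum>j\<in>UNIV. w $ j * (atom Phi l \<bullet> atom Phi j))"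
    by (simp add: matrix_vector_mult_eq_sum_atoms inner_sum_right)
  also have "\<dots> = (\<Sum>j\<in>S. w $ j * (atom Phi l \<bullet> atom Phi j))"
    using assms by (intro sum.mono_neutral_right) (auto simp: vec_support_def)
  finally show ?thesis .
qed

lemma abs_inner_atom_off_support_le:
  assumes "vec_support w \<subseteq> S" "\<And>j. \<bar>w $ j\<bar> \<le> W" "l \<notin> S"
  shows "\<bar>atom Phi l \<bullet> (Phi *v w)\<bar> \<le> real (card S) * W * coherence Phi"
proof -
  have "0 \<le> W" by (meson abs_ge_zero assms(2) order_trans)
  have "\<bar>atom Phi l \<bullet> (Phi *v w)\<bar> \<le> (\<Sum>j\<in>S. \<bar>w $ j\<bar> * \<bar>atom Phi l \<bullet> atom Phi j\<bar>)"
    unfolding inner_atom_matrix_vector_mult_supported[OF assms(1)] abs_mult[symmetric]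
    by (rule sum_abs)
  also have "\<dots> \<le> (\<Sum>j\<in>S. W * coherence Phi)"
    using assms(3) \<open>0 \<le> W\<close> by (intro sum_mono mult_mono assms(2) abs_inner_atoms_le_coherence) auto
  finally show ?thesis by simp
qed

lemma abs_inner_atom_on_support_ge:
  assumes "is_dictionary Phi" "vec_support w \<subseteq> S"
    and "\<And>j. \<bar>w $ j\<bar> \<le> \<bar>w $ l\<bar>" "l \<in> S"
  shows "\<bar>w $ l\<bar> * (1 - (real (card S) - 1) * coherence Phi) \<le> \<bar>atom Phi l \<bullet> (Phi *v w)\<bar>"
proof -
  have "finite S" by simp
  have split: "atom Phi l \<bullet> (Phi *v w) = w $ l + (\<Sum>j\<in>S - {l}. w $ j * (atom Phi l \<bullet> atom Phi j))"
    unfolding inner_atom_matrix_vector_mult_supported[OF assms(2)] sum.remove[OF \<open>finite S\<close> assms(4)]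
    using inner_atom_self[OF assms(1)] by simp
  have "\<bar>\<Sum>j\<in>S - {l}. w $ j * (atom Phi l \<bullet> atom Phi j)\<bar>
      \<le> (\<Sum>j\<in>S - {l}. \<bar>w $ j\<bar> * \<bar>atom Phi l \<bullet> atom Phi j\<bar>)"
    unfolding abs_mult[symmetric] by (rule sum_abs)
  also have "\<dots> \<le> (\<Sum>j\<in>S - {l}. \<bar>w $ l\<bar> * coherence Phi)"
    by (intro sum_mono mult_mono assms(3) abs_inner_atoms_le_coherence) auto
  also have "\<dots> = (real (card S) - 1) * \<bar>w $ l\<bar> * coherence Phi"
    using assms(4) card_gt_0_iff[of S] by (auto simp: card_Diff_singleton Suc_le_eq)
  finally show ?thesis unfolding split by (simp add: algebra_simps)
qed

lemma norm_matrix_vector_mult_sq_le: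
  assumes "vec_support w \<subseteq> S" "\<And>j. \<bar>w $ j\<bar> \<le> W"
    and "\<And>j. \<bar>atom Phi j \<bullet> (Phi *v w)\<bar> \<le> M"
  shows "(norm (Phi *v w))\<^sup>2 \<le> real (card S) * W * M"
proof -
  have "0 \<le> W" by (meson abs_ge_zero assms(2) order_trans)
  have "(norm (Phi *v w))\<^sup>2 = (\<Sum>j\<in>UNIV. w $ j * (atom Phi j \<bullet> (Phi *v w)))"
    by (simp add: power2_norm_eq_inner inner_matrix_vector_mult)
  also have "\<dots> = (\<Sum>j\<in>S. w $ j * (atom Phi j \<bullet> (Phi *v w)))"
    using assms(1) by (intro sum.mono_neutral_right) (auto simp: vec_support_def)
  also have "\<dots> \<le> (\<Sum>j\<in>S. W * M)"
  proof (rule sum_mono)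
    fix j
    have "w $ j * (atom Phi j \<bullet> (Phi *v w)) \<le> \<bar>w $ j\<bar> * \<bar>atom Phi j \<bullet> (Phi *v w)\<bar>"
      by (metis abs_ge_self abs_mult)
    also have "\<dots> \<le> W * M" using \<open>0 \<le> W\<close> by (intro mult_mono assms(2,3)) auto
    finally show "w $ j * (atom Phi j \<bullet> (Phi *v w)) \<le> W * M" .
  qed
  finally show ?thesis by simp
qed

(* The atom of a largest coefficient w_l correlates with Phi w by at least
   |w_l| (1 - (|S| - 1) mu), an atom outside S by at most |S| |w_l| mu. *)
lemma coherence_exact_recovery:
  assumes dict: "is_dictionary Phi"
    and coh: "(2 * real (card S) - 1) * coherence Phi < 1"
    and supp: "vec_support w \<subseteq> S"
    and nonzero: "Phi *v w \<noteq> 0"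
    and greedy: "\<And>j. \<bar>atom Phi j \<bullet> (Phi *v w)\<bar> \<le> \<bar>atom Phi i \<bullet> (Phi *v w)\<bar>"
  shows "i \<in> S" and "(norm (Phi *v w))\<^sup>2 \<le> 2 * real (card S) * (atom Phi i \<bullet> (Phi *v w))\<^sup>2"
proof -
  define \<mu> where "\<mu> = coherence Phi"
  define M where "M = \<bar>atom Phi i \<bullet> (Phi *v w)\<bar>"
  obtain l where l_max: "\<And>j. \<bar>w $ j\<bar> \<le> \<bar>w $ l\<bar>"
    using ex_abs_component_max by blast
  have "w \<noteq> 0" using nonzero by auto
  then obtain j where "w $ j \<noteq> 0" by (auto simp: vec_eq_iff)
  then have W_pos: "0 < \<bar>w $ l\<bar>" using l_max[of j] by linarith
  then have "l \<in> S" using supp by (auto simp: vec_support_def)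
  have low: "\<bar>w $ l\<bar> * (1 - (real (card S) - 1) * \<mu>) \<le> M"
    using abs_inner_atom_on_support_ge[OF dict supp l_max \<open>l \<in> S\<close>] greedy[of l]
    unfolding \<mu>_def M_def by linarith
  have "\<bar>w $ l\<bar> * ((2 * real (card S) - 1) * \<mu>) < \<bar>w $ l\<bar>"
    using mult_strict_left_mono[OF coh W_pos] by (simp add: \<mu>_def)
  then have "real (card S) * \<bar>w $ l\<bar> * \<mu> < \<bar>w $ l\<bar> * (1 - (real (card S) - 1) * \<mu>)"
    by (simp add: algebra_simps)
  then show "i \<in> S"
    using abs_inner_atom_off_support_le[OF supp l_max, of i Phi] low unfolding \<mu>_def M_def
    by (meson not_le order_trans)
  have "0 \<le> \<mu>" by (simp add: \<mu>_def coherence_nonneg)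
  then have "1 / 2 \<le> 1 - (real (card S) - 1) * \<mu>" using coh by (simp add: \<mu>_def algebra_simps)
  then have "\<bar>w $ l\<bar> \<le> 2 * M"
    using low W_pos mult_left_mono[OF \<open>1 / 2 \<le> _\<close>, of "\<bar>w $ l\<bar>"] by linarith
  have "(norm (Phi *v w))\<^sup>2 \<le> real (card S) * \<bar>w $ l\<bar> * M"
    using norm_matrix_vector_mult_sq_le[OF supp l_max] greedy unfolding M_def by blast
  also have "\<dots> \<le> real (card S) * (2 * M) * M"
    using \<open>\<bar>w $ l\<bar> \<le> 2 * M\<close> by (intro mult_right_mono mult_left_mono) (auto simp: M_def)
  finally show "(norm (Phi *v w))\<^sup>2 \<le> 2 * real (card S) * (atom Phi i \<bullet> (Phi *v w))\<^sup>2"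
    by (simp add: M_def power2_eq_square)
qed

lemma line_search_decrease:
  fixes r D :: "'a::real_inner"
  assumes "0 < L" "norm D \<le> L" "0 \<le> c" "c \<le> r \<bullet> D" "c \<le> L\<^sup>2"
  shows "\<exists>g\<in>{0..1}. (norm (r - g *\<^sub>R D))\<^sup>2 \<le> (norm r)\<^sup>2 - c\<^sup>2 / L\<^sup>2"
proof
  define g where "g = c / L\<^sup>2"
  show "g \<in> {0..1}" using assms by (simp add: g_def)
  have "(norm (r - g *\<^sub>R D))\<^sup>2 = (norm r)\<^sup>2 - 2 * g * (r \<bullet> D) + g\<^sup>2 * (norm D)\<^sup>2"
    unfolding power2_norm_eq_inner by (simp add: inner_commute power2_eq_square algebra_simps)
  also have "\<dots> \<le> (norm r)\<^sup>2 - 2 * g * c + g\<^sup>2 * L\<^sup>2"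
    using assms \<open>g \<in> {0..1}\<close> by (intro add_mono diff_mono mult_left_mono power_mono) auto
  also have "\<dots> = (norm r)\<^sup>2 - c\<^sup>2 / L\<^sup>2"
    using assms by (simp add: g_def field_simps power2_eq_square)
  finally show "(norm (r - g *\<^sub>R D))\<^sup>2 \<le> (norm r)\<^sup>2 - c\<^sup>2 / L\<^sup>2" .
qed

definition fw_step :: "real^'n^'d \<Rightarrow> real^'d \<Rightarrow> real \<Rightarrow> real^'n \<Rightarrow> real^'n \<Rightarrow> bool" where
  "fw_step Phi y beta x x' \<longleftrightarrow>
     (\<exists>i sg gam.
        (\<forall>j. \<bar>atom Phi j \<bullet> residual Phi y x\<bar> \<le> \<bar>atom Phi i \<bullet> residual Phi y x\<bar>) \<and>
        sg \<in> {-1, 1} \<and>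
        (atom Phi i \<bullet> residual Phi y x \<noteq> 0 \<longrightarrow> sg = sgn (atom Phi i \<bullet> residual Phi y x)) \<and>
        (let s = (sg * beta) *\<^sub>R axis i 1 in
          gam \<in> {0..1} \<and>
          (\<forall>g\<in>{0..1}. (norm (y - Phi *v (x + gam *\<^sub>R (s - x))))\<^sup>2
                        \<le> (norm (y - Phi *v (x + g *\<^sub>R (s - x))))\<^sup>2) \<and>
          x' = x + gam *\<^sub>R (s - x)))"

lemma fw_run_iff: "fw_run Phi y beta xs \<longleftrightarrow> xs 0 = 0 \<and> (\<forall>k. fw_step Phi y beta (xs k) (xs (Suc k)))"
  unfolding fw_run_def fw_step_def ..

lemma fw_stepE:
  fixes Phi :: "real^'n^'d"
  assumes "fw_step Phi y beta x x'" "0 \<le> beta"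
  obtains i s gam where
    "\<And>j. \<bar>atom Phi j \<bullet> residual Phi y x\<bar> \<le> \<bar>atom Phi i \<bullet> residual Phi y x\<bar>"
    "residual Phi y x \<bullet> (Phi *v (s :: real^'n)) = beta * \<bar>atom Phi i \<bullet> residual Phi y x\<bar>"
    "l1norm s = beta" "vec_support s \<subseteq> {i}" "gam \<in> {0..1}"
    "\<And>g. g \<in> {0..1} \<Longrightarrow> (norm (residual Phi y x'))\<^sup>2 \<le> (norm (residual Phi y (x + g *\<^sub>R (s - x))))\<^sup>2"
    "x' = x + gam *\<^sub>R (s - x)"
proof -
  define r where "r = residual Phi y x"
  obtain i sg gam where greedy: "\<forall>j. \<bar>atom Phi j \<bullet> r\<bar> \<le> \<bar>atom Phi i \<bullet> r\<bar>"
    and sg: "sg \<in> {-1, 1}" "atom Phi i \<bullet> r \<noteq> 0 \<longrightarrow> sg = sgn (atom Phi i \<bullet> r)"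
    and gam: "gam \<in> {0..1}"
    and search: "\<forall>g\<in>{0..1}. (norm (residual Phi y (x + gam *\<^sub>R ((sg * beta) *\<^sub>R axis i 1 - x))))\<^sup>2
                   \<le> (norm (residual Phi y (x + g *\<^sub>R ((sg * beta) *\<^sub>R axis i 1 - x))))\<^sup>2"
    and x': "x' = x + gam *\<^sub>R ((sg * beta) *\<^sub>R axis i 1 - x)"
    using assms(1) unfolding fw_step_def Let_def residual_def r_def by blast
  define s :: "real^'n" where "s = (sg * beta) *\<^sub>R axis i 1"
  have "Phi *v s = (sg * beta) *\<^sub>R atom Phi i"
    by (simp add: s_def matrix_vector_mult_scaleR matrix_vector_mult_basis atom_def)
  then have "r \<bullet> (Phi *v s) = beta * \<bar>atom Phi i \<bullet> r\<bar>"
    using sg assms(2) by (cases "atom Phi i \<bullet> r = 0") (auto simp: inner_commute abs_sgn sgn_if)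
  moreover have "l1norm s = beta" using sg assms(2) by (auto simp: s_def l1norm_scaleR_axis abs_mult)
  moreover have "vec_support s \<subseteq> {i}" by (auto simp: s_def vec_support_def axis_def)
  ultimately show thesis
    using that greedy gam search x' unfolding r_def s_def by blast
qed

lemma fw_step_l1norm_le:
  assumes "fw_step Phi y beta x x'" "0 \<le> beta" "l1norm x \<le> beta"
  shows "l1norm x' \<le> beta"
proof -
  obtain s gam where "l1norm s = beta" "gam \<in> {0..1}" "x' = x + gam *\<^sub>R (s - x)"
    using fw_stepE[OF assms(1,2)] by metis
  then have "l1norm x' \<le> (1 - gam) * l1norm x + gam * beta"
    using l1norm_convex_combination_le[of gam x s] by auto
  also have "\<dots> \<le> (1 - gam) * beta + gam * beta"
    using \<open>gam \<in> {0..1}\<close> assms(3) by (intro add_mono mult_left_mono) auto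
  finally show ?thesis by (simp add: algebra_simps)
qed

lemma fw_step_residual_eq_zero:
  assumes "fw_step Phi y beta x x'" "0 \<le> beta" "residual Phi y x = 0"
  shows "residual Phi y x' = 0"
proof -
  obtain s where "(norm (residual Phi y x'))\<^sup>2 \<le> (norm (residual Phi y (x + 0 *\<^sub>R (s - x))))\<^sup>2"
    using fw_stepE[OF assms(1,2)] by (metis atLeastAtMost_iff order_refl zero_le_one)
  then show ?thesis using assms(3) by simp
qed

lemma fw_gap_ge:
  assumes "y = Phi *v xstar"
    and "\<And>j. \<bar>atom Phi j \<bullet> residual Phi y x\<bar> \<le> M"
    and "residual Phi y x \<bullet> (Phi *v s) = beta * M"
  shows "(beta - l1norm xstar) * M \<le> residual Phi y x \<bullet> (Phi *v (s - x))"
proof -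
  define r where "r = residual Phi y x"
  have "Phi *v x = y - r" by (simp add: r_def residual_def)
  then have "r \<bullet> (Phi *v (s - x)) = beta * M - r \<bullet> y + (norm r)\<^sup>2"
    using assms(3) by (simp add: r_def matrix_vector_mult_diff_distrib inner_diff_right power2_norm_eq_inner)
  moreover have "r \<bullet> y \<le> l1norm xstar * M"
    unfolding assms(1) by (rule inner_matrix_vector_mult_le) (use assms(2) in \<open>simp add: r_def\<close>)
  ultimately show ?thesis
    unfolding r_def by (simp add: algebra_simps) (smt (verit) zero_le_power2)
qed

lemma fw_step_residual_decrease:
  assumes dict: "is_dictionary Phi" and step: "fw_step Phi y beta x x'" and "0 < beta"
    and y: "y = Phi *v xstar" and "l1norm x \<le> beta" "l1norm xstar \<le> beta"
  shows "(norm (residual Phi y x'))\<^sup>2 \<le> (norm (residual Phi y x))\<^sup>2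
           - ((beta - l1norm xstar) * (atom Phi j \<bullet> residual Phi y x))\<^sup>2 / (2 * beta)\<^sup>2"
proof -
  define r where "r = residual Phi y x"
  define \<rho> where "\<rho> = beta - l1norm xstar"
  obtain i s where greedy: "\<And>j. \<bar>atom Phi j \<bullet> r\<bar> \<le> \<bar>atom Phi i \<bullet> r\<bar>"
    and vertex: "r \<bullet> (Phi *v s) = beta * \<bar>atom Phi i \<bullet> r\<bar>" "l1norm s = beta"
    and search: "\<And>g. g \<in> {0..1} \<Longrightarrow> (norm (residual Phi y x'))\<^sup>2 \<le> (norm (residual Phi y (x + g *\<^sub>R (s - x))))\<^sup>2"
    using fw_stepE[OF step] \<open>0 < beta\<close> unfolding r_def by (metis less_imp_le)
  define M where "M = \<bar>atom Phi i \<bullet> r\<bar>"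
  define D where "D = Phi *v (s - x)"
  have "0 \<le> \<rho>" "\<rho> \<le> beta" using assms(6) l1norm_nonneg[of xstar] by (auto simp: \<rho>_def)
  have "norm D \<le> 2 * beta"
    using norm_triangle_ineq4[of "Phi *v s" "Phi *v x"] norm_matrix_vector_mult_le_l1norm[OF dict]
      vertex(2) assms(5) by (simp add: D_def matrix_vector_mult_diff_distrib) (smt (verit))
  have "M \<le> 2 * beta"
    using abs_inner_atom_le_norm[OF dict, of i r] norm_residual_le[OF dict y, of x] assms(5,6)
    unfolding M_def r_def by linarith
  then have "\<rho> * M \<le> beta * (2 * beta)"
    using \<open>0 \<le> \<rho>\<close> \<open>\<rho> \<le> beta\<close> \<open>0 < beta\<close> by (intro mult_mono) (auto simp: M_def)
  also have "\<dots> \<le> (2 * beta)\<^sup>2" using \<open>0 < beta\<close> by (simp add: power2_eq_square)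
  finally have "\<rho> * M \<le> (2 * beta)\<^sup>2" .
  moreover have "\<rho> * M \<le> r \<bullet> D"
    using fw_gap_ge[OF y, of x M s beta] greedy vertex(1)
    unfolding \<rho>_def M_def D_def r_def by blast
  ultimately obtain g where "g \<in> {0..1}" "(norm (r - g *\<^sub>R D))\<^sup>2 \<le> (norm r)\<^sup>2 - (\<rho> * M)\<^sup>2 / (2 * beta)\<^sup>2"
    using line_search_decrease[of "2 * beta" D "\<rho> * M" r] \<open>norm D \<le> 2 * beta\<close> \<open>0 < beta\<close> \<open>0 \<le> \<rho>\<close>
    by (auto simp: M_def)
  moreover have "residual Phi y (x + g *\<^sub>R (s - x)) = r - g *\<^sub>R D"
    by (simp add: r_def D_def residual_def algebra_simps)
  moreover have "(\<rho> * (atom Phi j \<bullet> r))\<^sup>2 \<le> (\<rho> * M)\<^sup>2"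
    using greedy[of j] \<open>0 \<le> \<rho>\<close> unfolding M_def power_mult_distrib
    by (intro mult_left_mono) (auto simp: abs_le_square_iff[symmetric])
  ultimately show ?thesis
    using search[of g] unfolding r_def[symmetric] \<rho>_def[symmetric]
    by (smt (verit) divide_right_mono zero_le_power2)
qed

lemma fw_step_vec_support_subset:
  assumes dict: "is_dictionary Phi" and coh: "(2 * real (card S) - 1) * coherence Phi < 1"
    and y: "y = Phi *v xstar" and "vec_support xstar \<subseteq> S" "vec_support x \<subseteq> S"
    and "residual Phi y x \<noteq> 0" and step: "fw_step Phi y beta x x'" and "0 \<le> beta"
  shows "vec_support x' \<subseteq> S"
proof -
  obtain i s gam where greedy: "\<And>j. \<bar>atom Phi j \<bullet> residual Phi y x\<bar> \<le> \<bar>atom Phi i \<bullet> residual Phi y x\<bar>"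
    and "vec_support s \<subseteq> {i}" "x' = x + gam *\<^sub>R (s - x)"
    using fw_stepE[OF step \<open>0 \<le> beta\<close>] by metis
  have "vec_support (xstar - x) \<subseteq> S"
    using vec_support_diff_subset assms(4,5) by blast
  moreover note r = residual_eq_matrix_vector_mult_diff[OF y, of x]
  ultimately have "i \<in> S"
    using coherence_exact_recovery(1)[OF dict coh _ _ greedy[unfolded r]] assms(6)[unfolded r] by blast
  then show ?thesis
    using vec_support_convex_combination_subset[of x gam s] \<open>vec_support s \<subseteq> {i}\<close> \<open>x' = _\<close> assms(5)
    by blast
qed

lemma fw_step_contraction:
  assumes dict: "is_dictionary Phi" and coh: "(2 * real m - 1) * coherence Phi < 1"
    and "card S \<le> m" and y: "y = Phi *v xstar" and "vec_support xstar \<subseteq> S"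
    and supp: "residual Phi y x = 0 \<or> vec_support x \<subseteq> S"
    and step: "fw_step Phi y beta x x'" and "0 < beta" "l1norm x \<le> beta" "l1norm xstar \<le> beta"
  shows "(norm (residual Phi y x'))\<^sup>2
           \<le> (1 - (1 - l1norm xstar / beta)\<^sup>2 / (8 * m)) * (norm (residual Phi y x))\<^sup>2"
proof (cases "residual Phi y x = 0")
  case True
  then show ?thesis using fw_step_residual_eq_zero[OF step] \<open>0 < beta\<close> by simp
next
  case False
  define r where "r = residual Phi y x"
  define q where "q = 1 - l1norm xstar / beta"
  obtain i where greedy: "\<And>j. \<bar>atom Phi j \<bullet> r\<bar> \<le> \<bar>atom Phi i \<bullet> r\<bar>"
    using fw_stepE[OF step] \<open>0 < beta\<close> unfolding r_def by (metis less_imp_le)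
  have "vec_support (xstar - x) \<subseteq> S"
    using vec_support_diff_subset supp False assms(5) by blast
  then have "(norm r)\<^sup>2 \<le> 2 * real (card S) * (atom Phi i \<bullet> r)\<^sup>2"
    using coherence_exact_recovery(2)[OF dict coherence_condition_mono[OF coh \<open>card S \<le> m\<close>]]
      greedy False
    unfolding r_def residual_eq_matrix_vector_mult_diff[OF y] by fastforce
  also have "\<dots> \<le> 2 * real m * (atom Phi i \<bullet> r)\<^sup>2"
    using \<open>card S \<le> m\<close> by (intro mult_right_mono) auto
  finally have recovery: "(norm r)\<^sup>2 \<le> 2 * real m * (atom Phi i \<bullet> r)\<^sup>2" .
  have "0 < m"
  proof (rule ccontr)
    assume "\<not> 0 < m"
    then have "(norm r)\<^sup>2 \<le> 0" using recovery by simp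
    then show False using False unfolding r_def by simp
  qed
  have "(norm (residual Phi y x'))\<^sup>2 \<le> (norm r)\<^sup>2 - (q * (atom Phi i \<bullet> r))\<^sup>2 / 4"
    using fw_step_residual_decrease[OF dict step \<open>0 < beta\<close> y assms(9,10), of i] \<open>0 < beta\<close>
    unfolding r_def[symmetric] q_def by (simp add: field_simps power2_eq_square)
  moreover have "q\<^sup>2 / (8 * m) * (norm r)\<^sup>2 \<le> q\<^sup>2 / (8 * m) * (2 * real m * (atom Phi i \<bullet> r)\<^sup>2)"
    by (intro mult_left_mono recovery) simp
  moreover have "\<dots> = (q * (atom Phi i \<bullet> r))\<^sup>2 / 4"
    using \<open>0 < m\<close> by (simp add: field_simps)
  ultimately have "(norm (residual Phi y x'))\<^sup>2 \<le> (norm r)\<^sup>2 - q\<^sup>2 / (8 * m) * (norm r)\<^sup>2"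
    by linarith
  then show ?thesis unfolding r_def q_def by (simp add: algebra_simps)
qed

(* Once the residual vanishes every atom is greedy, so the support may leave S. *)
lemma fw_run_invariant:
  assumes run: "fw_run Phi y beta xs" and dict: "is_dictionary Phi"
    and coh: "(2 * real (card S) - 1) * coherence Phi < 1"
    and y: "y = Phi *v xstar" and "vec_support xstar \<subseteq> S" and "0 \<le> beta"
  shows "l1norm (xs k) \<le> beta \<and> (residual Phi y (xs k) = 0 \<or> vec_support (xs k) \<subseteq> S)"
proof (induction k)
  case 0
  then show ?case using run \<open>0 \<le> beta\<close> by (simp add: fw_run_iff l1norm_def vec_support_def)
next
  case (Suc k)
  have step: "fw_step Phi y beta (xs k) (xs (Suc k))" using run by (simp add: fw_run_iff)
  show ?case
    using Suc fw_step_l1norm_le[OF step \<open>0 \<le> beta\<close>] fw_step_residual_eq_zero[OF step \<open>0 \<le> beta\<close>]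
      fw_step_vec_support_subset[OF dict coh y \<open>vec_support xstar \<subseteq> S\<close> _ _ step \<open>0 \<le> beta\<close>]
    by blast
qed

lemma fw_run_linear_convergence:
  assumes run: "fw_run Phi y beta xs" and dict: "is_dictionary Phi"
    and coh: "(2 * real m - 1) * coherence Phi < 1" and y: "y = Phi *v xstar"
    and "l0norm xstar \<le> m" "0 < beta" "l1norm xstar \<le> beta"
  shows "(norm (residual Phi y (xs (Suc k))))\<^sup>2
           \<le> (1 - (1 - l1norm xstar / beta)\<^sup>2 / (8 * m)) * (norm (residual Phi y (xs k)))\<^sup>2"
proof -
  define S where "S = vec_support xstar"
  have "card S \<le> m" using assms(5) by (simp add: S_def l0norm_eq_card_vec_support)
  have "l1norm (xs k) \<le> beta \<and> (residual Phi y (xs k) = 0 \<or> vec_support (xs k) \<subseteq> S)"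
    using fw_run_invariant[OF run dict coherence_condition_mono[OF coh \<open>card S \<le> m\<close>] y]
      \<open>0 < beta\<close> by (simp add: S_def)
  moreover have "fw_step Phi y beta (xs k) (xs (Suc k))" using run by (simp add: fw_run_iff)
  ultimately show ?thesis
    using fw_step_contraction[OF dict coh \<open>card S \<le> m\<close> y] assms(6,7) by (simp add: S_def)
qed

lemma coherence_sparsity_condition:
  fixes \<mu> m :: real
  assumes "0 \<le> \<mu>" "\<mu> = 0 \<or> m < (inverse \<mu> + 1) / 2"
  shows "(2 * m - 1) * \<mu> < 1"
proof (cases "\<mu> = 0")
  case False
  then have "2 * m - 1 < inverse \<mu>" using assms by simp
  then have "(2 * m - 1) * \<mu> < inverse \<mu> * \<mu>"
    using assms(1) False by (intro mult_strict_right_mono) auto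
  then show ?thesis using False by simp
qed simp

lemma convergence_rate_bounds:
  fixes B q :: real and m :: nat
  assumes "0 \<le> B" "B < 1" "1 \<le> m" "0 < q" "q \<le> 1"
  shows "0 < (1/16) * ((1 - B) / m) * q\<^sup>2" and "(1/16) * ((1 - B) / m) * q\<^sup>2 \<le> 1"
    and "(1/16) * ((1 - B) / m) * q\<^sup>2 \<le> q\<^sup>2 / (8 * m)"
proof -
  define t where "t = (1 - B) / m"
  have t: "0 < t" "t \<le> 1" "t \<le> 1 / m" using assms by (auto simp: t_def field_simps)
  have q: "0 < q\<^sup>2" "q\<^sup>2 \<le> 1" using assms by (auto simp: power_le_one)
  show "0 < (1/16) * ((1 - B) / m) * q\<^sup>2" using t q by (simp add: t_def[symmetric])
  have "t * q\<^sup>2 \<le> 1 * 1" using t q by (intro mult_mono) auto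
  then show "(1/16) * ((1 - B) / m) * q\<^sup>2 \<le> 1" by (simp add: t_def[symmetric])
  have "(1/16) * t * q\<^sup>2 \<le> (1/16) * (1 / m) * q\<^sup>2" using t q by (intro mult_right_mono) auto
  also have "\<dots> \<le> q\<^sup>2 / (8 * m)" using q assms(3) by (simp add: field_simps)
  finally show "(1/16) * ((1 - B) / m) * q\<^sup>2 \<le> q\<^sup>2 / (8 * m)" by (simp add: t_def)
qed

theorem theorem2:
  fixes Phi :: "real^'n^'d" and y :: "real^'d" and xstar :: "real^'n"
    and m :: nat and beta :: real and xs :: "nat \<Rightarrow> real^'n"
  assumes "is_dictionary Phi"
    and "m \<ge> 1"
    and "coherence Phi = 0 \<or> real m < (inverse (coherence Phi) + 1) / 2"
    and "y = Phi *v xstar"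
    and "l0norm xstar \<le> m"
    and "beta > 0"
    and "l1norm xstar < beta"
    and "fw_run Phi y beta xs"
  shows "\<exists>K. \<forall>k\<ge>K.
           (norm (residual Phi y (xs (Suc k))))\<^sup>2
             \<le> (1 - (1/16) * ((1 - babel Phi (m - 1)) / m) * (1 - l1norm xstar / beta)\<^sup>2)
               * (norm (residual Phi y (xs k)))\<^sup>2
         \<and> 0 < (1/16) * ((1 - babel Phi (m - 1)) / m) * (1 - l1norm xstar / beta)\<^sup>2
         \<and> (1/16) * ((1 - babel Phi (m - 1)) / m) * (1 - l1norm xstar / beta)\<^sup>2 \<le> 1"
proof -
  define q where "q = 1 - l1norm xstar / beta"
  define \<theta> where "\<theta> = (1/16) * ((1 - babel Phi (m - 1)) / m) * q\<^sup>2"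
  have coh: "(2 * real m - 1) * coherence Phi < 1"
    using coherence_sparsity_condition[OF coherence_nonneg assms(3)] .
  have "babel Phi (m - 1) \<le> (real m - 1) * coherence Phi"
    using babel_le_coherence[of Phi "m - 1"] assms(2) by simp
  also have "\<dots> \<le> (2 * real m - 1) * coherence Phi"
    by (intro mult_right_mono coherence_nonneg) simp
  finally have "babel Phi (m - 1) < 1" using coh by linarith
  moreover have "0 < q" "q \<le> 1"
    using assms(6,7) l1norm_nonneg[of xstar] by (auto simp: q_def field_simps)
  ultimately have rate: "0 < \<theta>" "\<theta> \<le> 1" "\<theta> \<le> q\<^sup>2 / (8 * m)"
    using convergence_rate_bounds[OF babel_nonneg _ assms(2)] unfolding \<theta>_def by blast+
  have "(norm (residual Phi y (xs (Suc k))))\<^sup>2 \<le> (1 - \<theta>) * (norm (residual Phi y (xs k)))\<^sup>2" for k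
  proof -
    have "(norm (residual Phi y (xs (Suc k))))\<^sup>2 \<le> (1 - q\<^sup>2 / (8 * m)) * (norm (residual Phi y (xs k)))\<^sup>2"
      using fw_run_linear_convergence[OF assms(8,1) coh assms(4,5,6)] assms(7) by (simp add: q_def)
    also have "\<dots> \<le> (1 - \<theta>) * (norm (residual Phi y (xs k)))\<^sup>2"
      using rate(3) \<open>0 < q\<close> \<open>q \<le> 1\<close> by (intro mult_right_mono) auto
    finally show ?thesis .
  qed
  then show ?thesis using rate unfolding \<theta>_def q_def by blast
qed

end
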